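(* Let $\mathcal{L}$ be a square lattice. Then there exist natural numbers $n_1, \ldots, n_t$ such that $\mathcal{L}$ is isomorphic (as a lattice) to the product $c(n_1) \times c(n_2) \times \cdots \times c(n_t)$ of chain lattices.
   Context: All lattices are finite distributive. $x \in \mathcal{L}$ is join-irreducible if $x = y\vee z$ implies $x=y$ or $x=z$ (so the minimum of $\mathcal{L}$, called the root, is join-irreducible); $J(\mathcal{L})$ is the poset of join-irreducibles. $\mathcal{L}$ is a tree lattice if the Hasse diagram of $J(\mathcal{L})$ is a tree; a square lattice is a tree lattice in which every vertex of this Hasse diagram other than the root has degree at most two. $c(n)$ denotes the totally ordered lattice (chain) with $n$ elements; products of lattices carry the componentwise order. *)

theory Defs
  imports Main
begin

(* x is join-irreducible: x = y \<squnion> z implies x = y or x = z (so the minimum is included) *)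
definition join_irred :: "'a::lattice \<Rightarrow> bool" where
  "join_irred x \<longleftrightarrow> (\<forall>y z. x = sup y z \<longrightarrow> x = y \<or> x = z)"

definition JI :: "'a::lattice set" where
  "JI = {x. join_irred x}"

definition hasse_cover :: "'a::order set \<Rightarrow> 'a \<Rightarrow> 'a \<Rightarrow> bool" where
  "hasse_cover J x y \<longleftrightarrow> x \<in> J \<and> y \<in> J \<and> x < y \<and> \<not> (\<exists>z\<in>J. x < z \<and> z < y)"

definition hasse_adj :: "'a::order set \<Rightarrow> 'a \<Rightarrow> 'a \<Rightarrow> bool" where
  "hasse_adj J x y \<longleftrightarrow> hasse_cover J x y \<or> hasse_cover J y x"

definition graph_connected :: "'a set \<Rightarrow> ('a \<Rightarrow> 'a \<Rightarrow> bool) \<Rightarrow> bool" where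
  "graph_connected V E \<longleftrightarrow>
     (\<forall>x\<in>V. \<forall>y\<in>V. (x, y) \<in> {(a, b). a \<in> V \<and> b \<in> V \<and> E a b}\<^sup>*)"

definition graph_has_cycle :: "'a set \<Rightarrow> ('a \<Rightarrow> 'a \<Rightarrow> bool) \<Rightarrow> bool" where
  "graph_has_cycle V E \<longleftrightarrow>
     (\<exists>vs. length vs \<ge> 3 \<and> distinct vs \<and> set vs \<subseteq> V \<and>
        (\<forall>i. Suc i < length vs \<longrightarrow> E (vs ! i) (vs ! Suc i)) \<and> E (last vs) (hd vs))"

definition is_tree :: "'a set \<Rightarrow> ('a \<Rightarrow> 'a \<Rightarrow> bool) \<Rightarrow> bool" where
  "is_tree V E \<longleftrightarrow> V \<noteq> {} \<and> graph_connected V E \<and> \<not> graph_has_cycle V E"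

definition tree_lattice :: "'a::lattice itself \<Rightarrow> bool" where
  "tree_lattice _ \<longleftrightarrow> is_tree (JI :: 'a set) (hasse_adj JI)"

definition square_lattice :: "'a::lattice itself \<Rightarrow> bool" where
  "square_lattice T \<longleftrightarrow> tree_lattice T \<and>
     (\<forall>x\<in>(JI :: 'a set). \<not> (\<forall>y. x \<le> y) \<longrightarrow> card {y\<in>JI. hasse_adj JI x y} \<le> 2)"

(* c(n_0) x ... x c(n_{t-1}), c(n) = {0..<n} with the usual order, componentwise order;
   tuples represented as functions nat \<Rightarrow> nat that vanish outside {0..<t} *)
definition chain_product :: "nat \<Rightarrow> (nat \<Rightarrow> nat) \<Rightarrow> (nat \<Rightarrow> nat) set" where
  "chain_product t n = {g. (\<forall>i<t. g i < n i) \<and> (\<forall>i\<ge>t. g i = 0)}"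

end

theory Submission
  imports Defs
begin

text \<open>Since the Hasse diagram of \<open>J(L)\<close> is a tree, no join-irreducible has two lower covers:
  descending paths from both covers to a maximal common lower bound would close a cycle. A
  join-irreducible other than the root already has a lower cover, so by the degree bound it has at
  most one upper cover. Hence \<open>J(L)\<close> without the root is the disjoint union of the chains above its
  minimal elements, and elements of different chains are incomparable. In a finite distributive
  lattice join-irreducibles are join-prime and every element is determined by the join-irreducibles
  below it, so counting, for each chain, its elements below \<open>x\<close> is a lattice isomorphism onto a
  product of chains.\<close>

lemma ex_hasse_cover_below:
  fixes J :: "'a::order set"
  assumes "finite J" "z \<in> J" "y \<in> J" "z < y"
  shows "\<exists>c. z \<le> c \<and> hasse_cover J c y"
proof -
  let ?S = "{q\<in>J. z \<le> q \<and> q < y}"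
  obtain m where m: "m \<in> ?S" and max: "\<forall>w\<in>?S. m \<le> w \<longrightarrow> m = w"
    using finite_has_maximal2[of ?S z] assms by auto
  have "\<not> (w \<in> J \<and> m < w \<and> w < y)" for w
    using m max by (auto dest: order.strict_implies_order)
  then show ?thesis
    using m assms unfolding hasse_cover_def by blast
qed

lemma ex_hasse_cover_above:
  fixes J :: "'a::order set"
  assumes "finite J" "z \<in> J" "y \<in> J" "z < y"
  shows "\<exists>c. c \<le> y \<and> hasse_cover J z c"
proof -
  let ?S = "{q\<in>J. z < q \<and> q \<le> y}"
  obtain m where m: "m \<in> ?S" and min: "\<forall>w\<in>?S. w \<le> m \<longrightarrow> m = w"
    using finite_has_minimal2[of ?S y] assms by auto
  have "\<not> (w \<in> J \<and> z < w \<and> w < m)" for w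
    using m min by (auto dest: order.strict_implies_order)
  then show ?thesis
    using m assms unfolding hasse_cover_def by blast
qed

lemma hasse_descending_path:
  fixes J :: "'a::order set"
  assumes "finite J" "z \<in> J" "y \<in> J" "z \<le> y"
  shows "\<exists>ws. hd ws = y \<and> last ws = z \<and> ws \<noteq> [] \<and> distinct ws \<and>
           set ws \<subseteq> {q\<in>J. z \<le> q \<and> q \<le> y} \<and> successively (\<lambda>a b. hasse_cover J b a) ws"
  using assms(3,4)
proof (induction "card {q\<in>J. z \<le> q \<and> q \<le> y}" arbitrary: y rule: less_induct)
  case (less y)
  show ?case
  proof (cases "z = y")
    case True
    then show ?thesis using less.prems by (intro exI[of _ "[y]"]) auto
  next
    case False
    then obtain c where c: "z \<le> c" "hasse_cover J c y"
      using ex_hasse_cover_below[OF assms(1,2) less.prems(1)] less.prems(2) by (auto simp: less_le)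
    have cJ: "c \<in> J" and cy: "c < y" using c unfolding hasse_cover_def by auto
    have "{q\<in>J. z \<le> q \<and> q \<le> c} \<subset> {q\<in>J. z \<le> q \<and> q \<le> y}"
      using cy less.prems by (auto dest: order.strict_trans2)
    then have "card {q\<in>J. z \<le> q \<and> q \<le> c} < card {q\<in>J. z \<le> q \<and> q \<le> y}"
      using assms(1) by (intro psubset_card_mono) auto
    then obtain ws where ws: "hd ws = c" "last ws = z" "ws \<noteq> []" "distinct ws"
      "set ws \<subseteq> {q\<in>J. z \<le> q \<and> q \<le> c}" "successively (\<lambda>a b. hasse_cover J b a) ws"
      using less.hyps cJ c(1) by blast
    have "y \<notin> set ws" using ws(5) cy by fastforce
    moreover have "set ws \<subseteq> {q\<in>J. z \<le> q \<and> q \<le> y}" using ws(5) cy by fastforce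
    ultimately show ?thesis
      using ws less.prems c(2) by (intro exI[of _ "y # ws"]) (auto simp: successively_Cons)
  qed
qed

lemma hasse_ascending_path:
  fixes J :: "'a::order set"
  assumes "finite J" "z \<in> J" "y \<in> J" "z \<le> y"
  shows "\<exists>ws. hd ws = z \<and> last ws = y \<and> ws \<noteq> [] \<and> distinct ws \<and>
           set ws \<subseteq> {q\<in>J. z \<le> q \<and> q \<le> y} \<and> successively (hasse_cover J) ws"
proof -
  obtain ws where "hd ws = y" "last ws = z" "ws \<noteq> []" "distinct ws"
    "set ws \<subseteq> {q\<in>J. z \<le> q \<and> q \<le> y}" "successively (\<lambda>a b. hasse_cover J b a) ws"
    using hasse_descending_path[OF assms] by blast
  then show ?thesis
    by (intro exI[of _ "rev ws"]) (simp add: hd_rev last_rev successively_rev)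
qed

lemma graph_has_cycleI:
  assumes "distinct (p # xs @ ys)" "set (p # xs @ ys) \<subseteq> V" "xs \<noteq> []" "ys \<noteq> []"
    and "E p (hd xs)" "successively E xs" "E (last xs) (hd ys)" "successively E ys" "E (last ys) p"
  shows "graph_has_cycle V E"
proof -
  have "length (p # xs @ ys) \<ge> 3" using assms(3,4) by (cases xs; cases ys) auto
  moreover have "successively E (p # xs @ ys)"
    using assms(3-8) by (simp add: successively_Cons successively_append_iff)
  ultimately show ?thesis
    using assms(1,2,4,9) unfolding graph_has_cycle_def successively_conv_nth
    by (intro exI[of _ "p # xs @ ys"]) simp
qed

lemma two_lower_covers_imp_cycle:
  fixes J :: "'a::order set"
  assumes fin: "finite J" and r: "r \<in> J" "\<forall>q\<in>J. r \<le> q"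
    and c1: "hasse_cover J y1 p" and c2: "hasse_cover J y2 p" and "y1 \<noteq> y2"
  shows "graph_has_cycle J (hasse_adj J)"
proof -
  have y: "y1 \<in> J" "y2 \<in> J" "y1 < p" "y2 < p"
    using c1 c2 unfolding hasse_cover_def by auto
  have "\<not> y2 \<le> y1"
    using c2 y \<open>y1 \<noteq> y2\<close> unfolding hasse_cover_def by (auto simp: le_less)
  let ?B = "{q\<in>J. q \<le> y1 \<and> q \<le> y2}"
  obtain z where z: "z \<in> ?B" and zmax: "\<forall>q\<in>?B. z \<le> q \<longrightarrow> z = q"
    using finite_has_maximal2[of ?B r] fin r y by auto
  obtain ws where ws: "hd ws = y1" "last ws = z" "ws \<noteq> []" "distinct ws"
      "set ws \<subseteq> {q\<in>J. z \<le> q \<and> q \<le> y1}" "successively (\<lambda>a b. hasse_cover J b a) ws"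
    using hasse_descending_path[OF fin, of z y1] z y by auto
  obtain us where us: "hd us = z" "last us = y2" "us \<noteq> []" "distinct us"
      "set us \<subseteq> {q\<in>J. z \<le> q \<and> q \<le> y2}" "successively (hasse_cover J) us"
    using hasse_ascending_path[OF fin, of z y2] z y by auto
  then obtain bs where bs: "us = z # bs" by (cases us) auto
  have "bs \<noteq> []" "last bs = y2" using us(2) bs z \<open>\<not> y2 \<le> y1\<close> by (auto split: if_splits)
  have "z \<notin> set bs" "distinct bs" and bs_set: "set bs \<subseteq> {q\<in>J. z \<le> q \<and> q \<le> y2}"
    using us(4,5) bs by auto
  text \<open>The walk goes down from \<open>p\<close> through \<open>y1\<close> to \<open>z\<close> and back up through \<open>y2\<close>;
    maximality of \<open>z\<close> among common lower bounds makes the two halves disjoint.\<close>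
  have "set ws \<inter> set bs = {}"
  proof -
    have "q = z" if "q \<in> set ws" "q \<in> set bs" for q
      using that ws(5) bs_set zmax by auto
    then show ?thesis using \<open>z \<notin> set bs\<close> by blast
  qed
  have "p \<notin> set ws" "p \<notin> set bs"
    using ws(5) bs_set y(3,4) by (blast dest: leD)+
  have "successively (hasse_adj J) ws"
    using ws(6) by (rule successively_mono) (simp add: hasse_adj_def)
  moreover have "successively (hasse_adj J) (z # bs)"
    using us(6) bs by (auto elim: successively_mono simp: hasse_adj_def)
  ultimately show ?thesis
    using ws \<open>bs \<noteq> []\<close> \<open>last bs = y2\<close> \<open>distinct bs\<close> \<open>set ws \<inter> set bs = {}\<close>
      \<open>p \<notin> set ws\<close> \<open>p \<notin> set bs\<close> bs_set c1 c2
    by (intro graph_has_cycleI[of p ws bs]) (auto simp: hasse_adj_def hasse_cover_def successively_Cons)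
qed

lemma least_in_JI:
  fixes r :: "'a::lattice"
  assumes "\<And>x. r \<le> x"
  shows "r \<in> JI"
  unfolding JI_def join_irred_def using assms by (auto intro: antisym)

lemma JI_le_supD:
  fixes p :: "'a::distrib_lattice"
  assumes "p \<in> JI" "p \<le> sup x y"
  shows "p \<le> x \<or> p \<le> y"
proof -
  have "p = sup (inf p x) (inf p y)"
    using assms(2) by (simp add: inf_sup_distrib1[symmetric] inf.absorb1)
  then have "p = inf p x \<or> p = inf p y"
    using assms(1) unfolding JI_def join_irred_def by blast
  then show ?thesis by (metis inf.cobounded2)
qed

lemma le_if_JI_below_le:
  fixes x y :: "'a::{finite,lattice}"
  assumes "\<And>p. p \<in> JI \<Longrightarrow> p \<le> x \<Longrightarrow> p \<le> y"
  shows "x \<le> y"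
  using assms
proof (induction "card {q. q < x}" arbitrary: x rule: less_induct)
  case (less x)
  show ?case
  proof (cases "x \<in> JI")
    case True
    then show ?thesis using less.prems by simp
  next
    case False
    then obtain a b where ab: "x = sup a b" "a < x" "b < x"
      unfolding JI_def join_irred_def by (auto simp: less_le)
    have "card {q. q < c} < card {q. q < x}" if "c < x" for c
      using that by (intro psubset_card_mono) (auto dest: order.strict_trans)
    then have "a \<le> y" "b \<le> y"
      using less ab by (meson order.strict_implies_order order.trans)+
    then show ?thesis using ab by simp
  qed
qed

lemma square_lattice_lower_cover_unique:
  fixes r y1 y2 p :: "'a::{finite,lattice}"
  assumes "square_lattice TYPE('a)" "\<And>x. r \<le> x"
    and "hasse_cover JI y1 p" "hasse_cover JI y2 p"
  shows "y1 = y2"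
proof (rule ccontr)
  assume "y1 \<noteq> y2"
  then have "graph_has_cycle (JI::'a set) (hasse_adj JI)"
    using two_lower_covers_imp_cycle[of JI r y1 p y2] assms(2-4) least_in_JI[of r] by auto
  then show False
    using assms(1) unfolding square_lattice_def tree_lattice_def is_tree_def by blast
qed

lemma square_lattice_upper_cover_unique:
  fixes r p u1 u2 :: "'a::{finite,lattice}"
  assumes sq: "square_lattice TYPE('a)" and r: "\<And>x. r \<le> x"
    and p: "p \<in> JI" "p \<noteq> r" and "hasse_cover JI p u1" "hasse_cover JI p u2"
  shows "u1 = u2"
proof (rule ccontr)
  assume "u1 \<noteq> u2"
  obtain c where c: "hasse_cover JI c p"
    using ex_hasse_cover_below[OF finite[of JI], of r p] least_in_JI[of r] p r by (auto simp: less_le)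
  have "c < u1" "c < u2"
    using c assms(5,6) unfolding hasse_cover_def by (auto dest: order.strict_trans)
  then have "3 = card {c, u1, u2}" using \<open>u1 \<noteq> u2\<close> by (auto dest: less_imp_neq)
  also have "\<dots> \<le> card {y\<in>(JI::'a set). hasse_adj JI p y}"
    using c assms(5,6) unfolding hasse_adj_def hasse_cover_def by (intro card_mono) auto
  also have "\<dots> \<le> 2"
    using sq p r unfolding square_lattice_def by (metis antisym)
  finally show False by simp
qed

lemma square_lattice_JI_below_chain:
  fixes r q :: "'a::{finite,lattice}"
  assumes sq: "square_lattice TYPE('a)" and r: "\<And>x. r \<le> x" and "q \<in> JI"
  shows "Complete_Partial_Order.chain (\<le>) {a\<in>JI. a \<le> q}"
  using assms(3)
proof (induction "card {x. x < q}" arbitrary: q rule: less_induct)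
  case (less q)
  show ?case
  proof (rule chainI)
    fix a b assume ab: "a \<in> {a\<in>JI. a \<le> q}" "b \<in> {a\<in>JI. a \<le> q}"
    show "a \<le> b \<or> b \<le> a"
    proof (cases "a = q \<or> b = q")
      case True
      then show ?thesis using ab by auto
    next
      case False
      then obtain c1 c2 where c: "a \<le> c1" "hasse_cover JI c1 q" "b \<le> c2" "hasse_cover JI c2 q"
        using ex_hasse_cover_below[OF finite[of JI], of a q] ex_hasse_cover_below[OF finite[of JI], of b q]
          ab less.prems by (auto simp: less_le)
      then have "c1 = c2" by (intro square_lattice_lower_cover_unique[OF sq r])
      have "c1 \<in> JI" "c1 < q" using c unfolding hasse_cover_def by auto
      then have "card {x. x < c1} < card {x. x < q}"
        by (intro psubset_card_mono) (auto dest: order.strict_trans)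
      then show ?thesis
        using less.hyps \<open>c1 \<in> JI\<close> ab c \<open>c1 = c2\<close> by (auto dest: chainD)
    qed
  qed
qed

lemma square_lattice_JI_above_chain:
  fixes r p :: "'a::{finite,lattice}"
  assumes sq: "square_lattice TYPE('a)" and r: "\<And>x. r \<le> x" and "p \<in> JI" "p \<noteq> r"
  shows "Complete_Partial_Order.chain (\<le>) {a\<in>JI. p \<le> a}"
  using assms(3,4)
proof (induction "card {x. p < x}" arbitrary: p rule: less_induct)
  case (less p)
  show ?case
  proof (rule chainI)
    fix a b assume ab: "a \<in> {a\<in>JI. p \<le> a}" "b \<in> {a\<in>JI. p \<le> a}"
    show "a \<le> b \<or> b \<le> a"
    proof (cases "a = p \<or> b = p")
      case True
      then show ?thesis using ab by auto
    next
      case False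
      then obtain c1 c2 where c: "c1 \<le> a" "hasse_cover JI p c1" "c2 \<le> b" "hasse_cover JI p c2"
        using ex_hasse_cover_above[OF finite[of JI], of p a] ex_hasse_cover_above[OF finite[of JI], of p b]
          ab less.prems by (auto simp: less_le)
      then have "c1 = c2" using less.prems by (intro square_lattice_upper_cover_unique[OF sq r])
      have "c1 \<in> JI" "p < c1" using c unfolding hasse_cover_def by auto
      moreover have "c1 \<noteq> r" using \<open>p < c1\<close> r by (metis leD)
      moreover have "card {x. c1 < x} < card {x. p < x}"
        using \<open>p < c1\<close> by (intro psubset_card_mono) (auto dest: order.strict_trans)
      ultimately show ?thesis
        using less.hyps ab c \<open>c1 = c2\<close> by (auto dest: chainD)
    qed
  qed
qed

lemma card_Un_nested:
  assumes "A \<subseteq> B \<or> B \<subseteq> A" "finite A" "finite B"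
  shows "card (A \<union> B) = max (card A) (card B)"
proof (cases "A \<subseteq> B")
  case True
  then show ?thesis using assms by (simp add: sup.absorb2 card_mono max.absorb2)
next
  case False
  then show ?thesis using assms by (simp add: sup.absorb1 card_mono max.absorb1)
qed

lemma card_Int_nested:
  assumes "A \<subseteq> B \<or> B \<subseteq> A" "finite A" "finite B"
  shows "card (A \<inter> B) = min (card A) (card B)"
proof (cases "A \<subseteq> B")
  case True
  then show ?thesis using assms by (simp add: inf.absorb1 card_mono min.absorb1)
next
  case False
  then show ?thesis using assms by (simp add: inf.absorb2 card_mono min.absorb2)
qed

definition count_below :: "'a::order set \<Rightarrow> 'a \<Rightarrow> nat" where
  "count_below C x = card {p\<in>C. p \<le> x}"

lemma chain_below_sets_nested:
  fixes C :: "'a::order set"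
  assumes "Complete_Partial_Order.chain (\<le>) C"
  shows "{p\<in>C. p \<le> x} \<subseteq> {p\<in>C. p \<le> y} \<or> {p\<in>C. p \<le> y} \<subseteq> {p\<in>C. p \<le> x}"
proof (rule ccontr)
  assume "\<not> ?thesis"
  then obtain a b where "a \<in> C" "a \<le> x" "\<not> a \<le> y" "b \<in> C" "b \<le> y" "\<not> b \<le> x" by auto
  with chainD[OF assms, of a b] show False
    using order_trans[of a b y] order_trans[of b a x] by blast
qed

lemma count_below_inf:
  fixes C :: "'a::lattice set"
  assumes "finite C" "Complete_Partial_Order.chain (\<le>) C"
  shows "count_below C (inf x y) = min (count_below C x) (count_below C y)"
proof -
  have "{p\<in>C. p \<le> inf x y} = {p\<in>C. p \<le> x} \<inter> {p\<in>C. p \<le> y}" by auto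
  then show ?thesis
    unfolding count_below_def using card_Int_nested[OF chain_below_sets_nested[OF assms(2)]] assms(1)
    by simp
qed

lemma count_below_sup:
  fixes C :: "'a::distrib_lattice set"
  assumes "finite C" "Complete_Partial_Order.chain (\<le>) C" "C \<subseteq> JI"
  shows "count_below C (sup x y) = max (count_below C x) (count_below C y)"
proof -
  have "{p\<in>C. p \<le> sup x y} = {p\<in>C. p \<le> x} \<union> {p\<in>C. p \<le> y}"
    using assms(3) by (auto dest: JI_le_supD intro: le_supI1 le_supI2)
  then show ?thesis
    unfolding count_below_def using card_Un_nested[OF chain_below_sets_nested[OF assms(2)]] assms(1)
    by simp
qed

lemma count_below_eq_imp_below_sets_eq:
  assumes "finite C" "Complete_Partial_Order.chain (\<le>) C" "count_below C x = count_below C y"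
  shows "{p\<in>C. p \<le> x} = {p\<in>C. p \<le> y}"
proof -
  have fin: "finite {p\<in>C. p \<le> z}" for z using assms(1) by simp
  from chain_below_sets_nested[OF assms(2), of x y] show ?thesis
  proof
    assume "{p\<in>C. p \<le> x} \<subseteq> {p\<in>C. p \<le> y}"
    then show ?thesis using card_subset_eq[OF fin] assms(3) unfolding count_below_def by blast
  next
    assume "{p\<in>C. p \<le> y} \<subseteq> {p\<in>C. p \<le> x}"
    then show ?thesis using card_subset_eq[OF fin] assms(3)[symmetric] unfolding count_below_def by blast
  qed
qed

lemma count_below_chain_surj:
  assumes "finite C" "Complete_Partial_Order.chain (\<le>) C" "1 \<le> k" "k \<le> card C"
  shows "\<exists>q\<in>C. count_below C q = k"
proof -
  have mono: "count_below C a < count_below C b" if "a \<in> C" "b \<in> C" "a < b" for a b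
    unfolding count_below_def using that assms(1)
    by (intro psubset_card_mono) (auto dest: order.strict_trans2 simp: less_le_not_le)
  have "inj_on (count_below C) C"
  proof (rule inj_onI, rule ccontr)
    fix a b assume "a \<in> C" "b \<in> C" "count_below C a = count_below C b" "a \<noteq> b"
    then show False using chainD[OF assms(2), of a b] mono[of a b] mono[of b a] by (auto simp: less_le)
  qed
  moreover have "count_below C ` C \<subseteq> {1..card C}"
    unfolding count_below_def using assms(1)
    by (auto simp: Suc_le_eq card_gt_0_iff intro: card_mono)
  ultimately have "count_below C ` C = {1..card C}"
    by (intro card_subset_eq) (auto simp: card_image)
  then have "k \<in> count_below C ` C" using assms(3,4) by simp
  then show ?thesis by auto
qed

locale JI_chain_decomposition =
  fixes r :: "'a::{finite,distrib_lattice}" and t :: nat and C :: "nat \<Rightarrow> 'a set"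
  assumes least: "\<And>x. r \<le> x"
    and chains_in_JI: "\<And>i. i < t \<Longrightarrow> C i \<subseteq> JI - {r}"
    and chains_cover: "JI - {r} \<subseteq> (\<Union>i<t. C i)"
    and chains: "\<And>i. i < t \<Longrightarrow> Complete_Partial_Order.chain (\<le>) (C i)"
    and chains_incomparable:
      "\<And>i j a b. i < t \<Longrightarrow> j < t \<Longrightarrow> a \<in> C i \<Longrightarrow> b \<in> C j \<Longrightarrow> a \<le> b \<Longrightarrow> i = j"
begin

definition coords :: "'a \<Rightarrow> nat \<Rightarrow> nat" where
  "coords x i = (if i < t then count_below (C i) x else 0)"

lemma coords_sup: "coords (sup x y) = (\<lambda>i. max (coords x i) (coords y i))"
proof
  fix i
  have "i < t \<Longrightarrow> C i \<subseteq> JI" using chains_in_JI by blast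
  then show "coords (sup x y) i = max (coords x i) (coords y i)"
    by (simp add: coords_def count_below_sup chains)
qed

lemma coords_inf: "coords (inf x y) = (\<lambda>i. min (coords x i) (coords y i))"
  by (simp add: fun_eq_iff coords_def count_below_inf chains)

lemma coords_least: "coords r = (\<lambda>i. 0)"
proof -
  have "{p\<in>C i. p \<le> r} = {}" if "i < t" for i
    using chains_in_JI[OF that] least by (auto intro: antisym)
  then show ?thesis by (auto simp: coords_def count_below_def)
qed

lemma inj_coords: "inj coords"
proof -
  have "x \<le> y" if "coords x = coords y" for x y
  proof (rule le_if_JI_below_le)
    fix p assume "p \<in> JI" "p \<le> x"
    show "p \<le> y"
    proof (cases "p = r")
      case False
      then obtain i where "i < t" "p \<in> C i" using chains_cover \<open>p \<in> JI\<close> by blast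
      moreover have "count_below (C i) x = count_below (C i) y"
        using that \<open>i < t\<close> unfolding coords_def by meson
      ultimately show ?thesis
        using count_below_eq_imp_below_sets_eq[OF finite chains] \<open>p \<le> x\<close> by blast
    qed (simp add: least)
  qed
  then show ?thesis by (metis injI antisym)
qed

definition factor_sizes :: "nat \<Rightarrow> nat" where
  "factor_sizes i = card (C i) + 1"

lemma coords_in_chain_product: "coords x \<in> chain_product t factor_sizes"
  unfolding chain_product_def coords_def factor_sizes_def count_below_def
  by (auto simp: less_Suc_eq_le intro: card_mono)

lemma coords_unit_vector:
  assumes "i < t" "k < factor_sizes i"
  shows "\<exists>c. coords c = (\<lambda>j. if j = i then k else 0)"
proof (cases "k = 0")
  case True
  then show ?thesis using coords_least by auto
next
  case False
  then obtain q where q: "q \<in> C i" "count_below (C i) q = k"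
    using count_below_chain_surj[OF _ chains[OF assms(1)], of k] assms(2)
    unfolding factor_sizes_def by auto
  have "count_below (C j) q = 0" if "j < t" "j \<noteq> i" for j
    using chains_incomparable[OF that(1) assms(1) _ q(1)] that(2) by (auto simp: count_below_def)
  then have "coords q = (\<lambda>j. if j = i then k else 0)"
    using q(2) assms(1) by (auto simp: coords_def)
  then show ?thesis by blast
qed

lemma chain_product_subset_range_coords: "chain_product t factor_sizes \<subseteq> range coords"
proof
  fix g assume g: "g \<in> chain_product t factor_sizes"
  have "\<exists>x. coords x = (\<lambda>j. if j < k then g j else 0)" if "k \<le> t" for k
    using that
  proof (induction k)
    case 0
    then show ?case using coords_least by auto
  next
    case (Suc k)
    then obtain x where x: "coords x = (\<lambda>j. if j < k then g j else 0)" by auto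
    obtain c where c: "coords c = (\<lambda>j. if j = k then g k else 0)"
      using coords_unit_vector[of k "g k"] g Suc.prems unfolding chain_product_def by auto
    have "coords (sup x c) = (\<lambda>j. if j < Suc k then g j else 0)"
      unfolding coords_sup x c by (auto simp: less_Suc_eq)
    then show ?case by blast
  qed
  then obtain x where "coords x = (\<lambda>j. if j < t then g j else 0)" by blast
  also have "\<dots> = g"
    using g unfolding chain_product_def by auto
  finally show "g \<in> range coords" by blast
qed

lemma bij_coords: "bij_betw coords UNIV (chain_product t factor_sizes)"
  using inj_coords coords_in_chain_product chain_product_subset_range_coords
  by (auto simp: bij_betw_def)

end

lemma square_lattice_JI_chain_decomposition:
  fixes r :: "'a::{finite,distrib_lattice}"
  assumes sq: "square_lattice TYPE('a)" and r: "\<And>x. r \<le> x"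
  shows "\<exists>t C. JI_chain_decomposition r t C"
proof -
  define M where "M = {m\<in>JI - {r}. \<forall>x\<in>JI - {r}. x \<le> m \<longrightarrow> x = m}"
  obtain e where e: "bij_betw e {0..<card M} M"
    using ex_bij_betw_nat_finite[of M] by auto
  then have eM: "e i \<in> M" if "i < card M" for i
    using that by (auto dest: bij_betwE)
  define C where "C i = {q\<in>JI. e i \<le> q}" for i
  have "JI_chain_decomposition r (card M) C"
  proof
    fix i assume "i < card M"
    then have "e i \<in> JI" "e i \<noteq> r" using eM unfolding M_def by auto
    then show "C i \<subseteq> JI - {r}" using r unfolding C_def by (auto dest: antisym)
    show "Complete_Partial_Order.chain (\<le>) (C i)"
      unfolding C_def by (rule square_lattice_JI_above_chain[OF sq r]) fact+
  next
    show "JI - {r} \<subseteq> (\<Union>i<card M. C i)"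
    proof
      fix p assume p: "p \<in> JI - {r}"
      obtain m where "m \<in> JI - {r}" "m \<le> p" "\<forall>x\<in>JI - {r}. x \<le> m \<longrightarrow> x = m"
        using finite_has_minimal2[OF finite p] by (auto simp: eq_commute)
      then have "m \<in> M" by (auto simp: M_def)
      then obtain i where "i < card M" "e i = m" using e by (force simp: bij_betw_def)
      then show "p \<in> (\<Union>i<card M. C i)" using p \<open>m \<le> p\<close> unfolding C_def by auto
    qed
  next
    fix i j a b assume ij: "i < card M" "j < card M" and "a \<in> C i" "b \<in> C j" "a \<le> b"
    then have "e i \<in> {q\<in>JI. q \<le> b}" "e j \<in> {q\<in>JI. q \<le> b}" "b \<in> JI"
      using eM unfolding C_def M_def by (auto dest: order.trans)
    then have "e i \<le> e j \<or> e j \<le> e i"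
      using square_lattice_JI_below_chain[OF sq r] by (blast dest: chainD)
    then have "e i = e j" using eM[OF ij(1)] eM[OF ij(2)] unfolding M_def by auto
    then show "i = j" using e ij by (auto simp: bij_betw_def inj_on_def)
  qed (fact r)
  then show ?thesis by blast
qed

theorem mainTheorem8:
  assumes "square_lattice TYPE('a::{finite, distrib_lattice})"
  shows "\<exists>(t::nat) (n::nat \<Rightarrow> nat) (f::'a \<Rightarrow> nat \<Rightarrow> nat).
           bij_betw f UNIV (chain_product t n) \<and>
           (\<forall>x y. f (sup x y) = (\<lambda>i. max (f x i) (f y i))) \<and>
           (\<forall>x y. f (inf x y) = (\<lambda>i. min (f x i) (f y i)))"
proof -
  obtain r :: 'a where r: "\<And>x. r \<le> x"
    using Inf_fin.coboundedI[OF finite UNIV_I] by blast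
  then obtain t C where "JI_chain_decomposition r t C"
    using square_lattice_JI_chain_decomposition assms by blast
  then interpret JI_chain_decomposition r t C .
  show ?thesis using bij_coords coords_sup coords_inf by blast
qed

end
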